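(* There exists a Bernstein set $B\subseteq\mathbb R^2$ which is not a $3$-I-covering.
   Context: A set $B\subseteq\mathbb R^2$ is a Bernstein set if for every uncountable Borel $Z\subseteq\mathbb R^2$ both $Z\cap B$ and $Z\setminus B$ are nonempty. A set $A\subseteq\mathbb R^2$ is a $3$-I-covering if for every $C\subseteq\mathbb R^2$ with $|C|=3$ there is an isometry $\phi$ of the Euclidean plane with $\phi[C]\subseteq A$. *)

theory Defs
  imports "HOL-Analysis.Analysis"
begin

definition plane_isometry :: "(real^2 \<Rightarrow> real^2) \<Rightarrow> bool" where
  "plane_isometry \<phi> \<longleftrightarrow> bij \<phi> \<and> (\<forall>x y. dist (\<phi> x) (\<phi> y) = dist x y)"

definition bernstein_set :: "(real^2) set \<Rightarrow> bool" where
  "bernstein_set B \<longleftrightarrow>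
     (\<forall>Z. Z \<in> sets borel \<and> uncountable Z \<longrightarrow> Z \<inter> B \<noteq> {} \<and> Z - B \<noteq> {})"

definition three_I_covering :: "(real^2) set \<Rightarrow> bool" where
  "three_I_covering A \<longleftrightarrow>
     (\<forall>C :: (real^2) set. card C = 3 \<longrightarrow> (\<exists>\<phi>. plane_isometry \<phi> \<and> \<phi> ` C \<subseteq> A))"

end

theory Submission
  imports Defs
begin

text \<open>
  Bernstein's transfinite construction, with one extra constraint. Enumerate, in the order type of
  the continuum, a family of continuum many sets of size continuum such that every uncountable Borel
  set contains a member. At each stage put into \<open>B\<close> a point of the current set that is not the
  third vertex of a unit equilateral triangle on two earlier points of \<open>B\<close> (fewer than continuum
  many points are excluded), and reserve another point for the complement. Then \<open>B\<close> is a
  Bernstein set containing no unit equilateral triangle, so no isometric copy of such a triangle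
  lies in \<open>B\<close>.

  The family consists of the injective projections of closed subsets of
  \<open>\<real>\<^sup>2 \<times> \<real>\<^sup>\<nat>\<close> of size continuum. Every Borel set \<open>Z\<close> is clopen in
  the topology induced by some \<open>g : \<real>\<^sup>2 \<rightarrow> \<real>\<^sup>\<nat>\<close> with closed graph (open sets are,
  and the property is preserved by complements and countable unions), so \<open>Z\<close> is the injective
  projection of a closed subset of the graph of \<open>g\<close>; if \<open>Z\<close> is uncountable, that closed set
  contains a perfect set, of size continuum. Closed subsets of the Polish space
  \<open>\<real>\<^sup>2 \<times> \<real>\<^sup>\<nat>\<close> are at most continuum many.
\<close>

unbundle cardinal_syntax

section \<open>Borel sets are clopen along closed graphs\<close>

definition graph :: "('a \<Rightarrow> 'b) \<Rightarrow> ('a \<times> 'b) set" where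
  "graph g = range (\<lambda>x. (x, g x))"

lemma inj_on_fst_graph: "inj_on fst (graph g)"
  by (auto simp: graph_def inj_on_def)

text \<open>\<open>open_along g A\<close>: \<open>A\<close> is open in the coarsest topology making \<open>x \<mapsto> (x, g x)\<close>
  continuous; it refines the given topology.\<close>
definition open_along :: "('a \<Rightarrow> nat \<Rightarrow> real) \<Rightarrow> 'a::topological_space set \<Rightarrow> bool" where
  "open_along g A \<longleftrightarrow> (\<exists>W. open W \<and> A = {x. (x, g x) \<in> W})"

lemma continuous_on_reindex:
  "continuous_on UNIV (\<lambda>y::'a \<Rightarrow> 'b::topological_space. \<lambda>n. y (f n))"
  by (rule continuous_on_coordinatewise_then_product) (rule continuous_on_product_coordinates)

lemma continuous_on_snd_coordinate:
  "continuous_on UNIV (\<lambda>p::'a::topological_space \<times> ('i \<Rightarrow> 'b::topological_space). snd p i)"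
  by (rule continuous_on_product_then_coordinatewise[OF continuous_on_snd[OF continuous_on_id]])

lemma continuous_on_map_snd:
  assumes "continuous_on UNIV \<pi>"
  shows "continuous_on UNIV (\<lambda>p::'a::topological_space \<times> 'b::topological_space. (fst p, \<pi> (snd p)))"
  by (intro continuous_on_Pair continuous_on_fst continuous_on_id
      continuous_on_compose2[OF assms continuous_on_snd]) auto

lemma open_along_compose:
  assumes "continuous_on UNIV \<pi>" and "open_along (\<pi> \<circ> h) A"
  shows "open_along h A"
proof -
  obtain W where W: "open W" "A = {x. (x, \<pi> (h x)) \<in> W}"
    using assms(2) by (auto simp: open_along_def)
  let ?f = "\<lambda>p. (fst p, \<pi> (snd p))"
  have "open (?f -` W)"
    using open_vimage[OF W(1) continuous_on_map_snd[OF assms(1)]] .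
  moreover have "A = {x. (x, h x) \<in> ?f -` W}"
    using W(2) by auto
  ultimately show ?thesis
    unfolding open_along_def by blast
qed

lemma closed_graph_inverse_infdist:
  fixes C :: "'a::metric_space set"
  assumes "closed C" "C \<noteq> {}"
  shows "closed (graph (\<lambda>z. if z \<in> C then -1 else 1 / infdist z C))"
proof -
  define e where "e z = (if z \<in> C then -1 else 1 / infdist z C)" for z
  have "graph e = {p. fst p \<in> C \<and> snd p = -1} \<union> {p. snd p * infdist (fst p) C = 1}"
  proof (intro equalityI subsetI)
    fix p assume "p \<in> graph e"
    then obtain z where p: "p = (z, e z)"
      by (auto simp: graph_def)
    show "p \<in> {p. fst p \<in> C \<and> snd p = -1} \<union> {p. snd p * infdist (fst p) C = 1}"
    proof (cases "z \<in> C")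
      case False
      then show ?thesis
        using infdist_pos_not_in_closed[OF assms False] by (simp add: p e_def)
    qed (simp add: p e_def)
  next
    fix p assume p: "p \<in> {p. fst p \<in> C \<and> snd p = -1} \<union> {p. snd p * infdist (fst p) C = 1}"
    obtain z t where zt: "p = (z, t)"
      by fastforce
    have "t = e z"
    proof (cases "z \<in> C")
      case True
      then show ?thesis
        using p by (simp add: zt e_def)
    next
      case False
      then show ?thesis
        using p infdist_pos_not_in_closed[OF assms False] by (simp add: zt e_def eq_divide_eq)
    qed
    then show "p \<in> graph e"
      by (simp add: zt graph_def)
  qed
  moreover have "{p :: 'a \<times> real. fst p \<in> C \<and> snd p = -1} = C \<times> {-1}"
    by auto
  then have "closed {p :: 'a \<times> real. fst p \<in> C \<and> snd p = -1}"
    using closed_Times[OF assms(1) closed_singleton] by simp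
  moreover have "closed {p :: 'a \<times> real. snd p * infdist (fst p) C = 1}"
    by (intro closed_Collect_eq continuous_intros)
  ultimately have "closed (graph e)"
    by (simp add: closed_Un)
  then show ?thesis
    by (simp add: e_def[abs_def])
qed

lemma closed_graph_case_nat:
  fixes g :: "'a::topological_space \<Rightarrow> nat \<Rightarrow> real" and e :: "'a \<times> (nat \<Rightarrow> real) \<Rightarrow> real"
  assumes "closed (graph g)" "closed (graph e)"
  shows "closed (graph (\<lambda>x. case_nat (e (x, g x)) (g x)))"
proof -
  define q :: "'a \<times> (nat \<Rightarrow> real) \<Rightarrow> 'a \<times> (nat \<Rightarrow> real)"
    where "q p = (fst p, \<lambda>n. snd p (Suc n))" for p
  have cont_q: "continuous_on UNIV q"
    unfolding q_def by (rule continuous_on_map_snd[OF continuous_on_reindex])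
  have "graph (\<lambda>x. case_nat (e (x, g x)) (g x)) = q -` graph g \<inter> (\<lambda>p. (q p, snd p 0)) -` graph e"
  proof (intro equalityI subsetI)
    fix p assume "p \<in> q -` graph g \<inter> (\<lambda>p. (q p, snd p 0)) -` graph e"
    then have "snd p = case_nat (e (fst p, g (fst p))) (g (fst p))"
      by (auto simp: graph_def q_def fun_eq_iff split: nat.split)
    then show "p \<in> graph (\<lambda>x. case_nat (e (x, g x)) (g x))"
      by (auto simp: graph_def image_iff prod_eq_iff)
  qed (auto simp: graph_def q_def)
  moreover have "continuous_on UNIV (\<lambda>p. (q p, snd p 0))"
    by (intro continuous_on_Pair cont_q continuous_on_snd_coordinate)
  ultimately show ?thesis
    using assms by (simp add: closed_Int closed_vimage cont_q)
qed

lemma closed_graph_refinement: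
  fixes g :: "'a::metric_space \<Rightarrow> nat \<Rightarrow> real"
  assumes g: "closed (graph g)" and W: "open W"
  defines "A \<equiv> {x. (x, g x) \<in> W}"
  shows "\<exists>h. closed (graph h) \<and> open_along h A \<and> open_along h (- A)"
proof (cases "W = UNIV")
  case True
  then have "open_along g A" "open_along g (- A)"
    unfolding open_along_def A_def by (auto intro: exI[of _ UNIV] exI[of _ "{}"])
  then show ?thesis
    using g by blast
next
  case False
  \<comment> \<open>Prepend to \<open>g x\<close> a coordinate that is positive exactly on \<open>A\<close>; it blows up near the
      boundary of \<open>W\<close>, which keeps the graph closed.\<close>
  have C: "closed (- W)" "- W \<noteq> {}"
    using W False by auto
  define e where "e z = (if z \<in> - W then -1 else 1 / infdist z (- W))" for z
  define h where "h x = case_nat (e (x, g x)) (g x)" for x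
  have sign_e: "e z > 0 \<longleftrightarrow> z \<in> W" "e z < 0 \<longleftrightarrow> z \<notin> W" for z
    using infdist_pos_not_in_closed[OF C, of z] by (auto simp: e_def)
  have "closed (graph h)"
    unfolding h_def e_def by (intro closed_graph_case_nat g closed_graph_inverse_infdist C)
  moreover have "A = {x. (x, h x) \<in> {p. snd p 0 > 0}}" "- A = {x. (x, h x) \<in> {p. snd p 0 < 0}}"
    by (auto simp: A_def h_def sign_e)
  moreover have "open {p::'a \<times> (nat \<Rightarrow> real). snd p 0 > 0}" "open {p::'a \<times> (nat \<Rightarrow> real). snd p 0 < 0}"
    by (intro open_Collect_less continuous_on_const continuous_on_snd_coordinate)+
  ultimately show ?thesis
    unfolding open_along_def by blast
qed

definition closed_graph_clopen :: "'a::metric_space set \<Rightarrow> bool" where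
  "closed_graph_clopen A \<longleftrightarrow> (\<exists>g. closed (graph g) \<and> open_along g A \<and> open_along g (- A))"

lemma closed_graph_clopen_open:
  assumes "open A"
  shows "closed_graph_clopen A"
proof -
  let ?g = "\<lambda>(x::'a) (n::nat). 0::real"
  have "graph ?g = UNIV \<times> {\<lambda>n. 0}"
    by (auto simp: graph_def)
  then have "closed (graph ?g)"
    by (simp add: closed_Times)
  moreover have "open (A \<times> (UNIV :: (nat \<Rightarrow> real) set))"
    using assms by (intro open_Times open_UNIV)
  ultimately have "\<exists>h. closed (graph h) \<and>
      open_along h {x. (x, ?g x) \<in> A \<times> UNIV} \<and> open_along h (- {x. (x, ?g x) \<in> A \<times> UNIV})"
    by (rule closed_graph_refinement)
  then show ?thesis
    unfolding closed_graph_clopen_def by simp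
qed

lemma closed_graph_clopen_Compl:
  "closed_graph_clopen A \<Longrightarrow> closed_graph_clopen (- A)"
  unfolding closed_graph_clopen_def by auto

lemma closed_graph_interleave:
  fixes gs :: "nat \<Rightarrow> 'a::topological_space \<Rightarrow> nat \<Rightarrow> real"
  assumes "\<And>i. closed (graph (gs i))"
  shows "closed (graph (\<lambda>x k. gs (fst (prod_decode k)) x (snd (prod_decode k))))"
proof -
  define g where "g x = (\<lambda>k. gs (fst (prod_decode k)) x (snd (prod_decode k)))" for x
  define \<pi> where "\<pi> i = (\<lambda>y::nat \<Rightarrow> real. \<lambda>j. y (prod_encode (i, j)))" for i
  have "graph g = (\<Inter>i. (\<lambda>p. (fst p, \<pi> i (snd p))) -` graph (gs i))"
  proof (intro equalityI subsetI)
    fix p assume p: "p \<in> (\<Inter>i. (\<lambda>p. (fst p, \<pi> i (snd p))) -` graph (gs i))"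
    obtain x y where p_eq: "p = (x, y)"
      by fastforce
    have \<pi>_y: "\<pi> i y = gs i x" for i
      using p by (auto simp: p_eq graph_def)
    have "y k = g x k" for k
      using fun_cong[OF \<pi>_y[of "fst (prod_decode k)"], of "snd (prod_decode k)"]
      by (simp add: \<pi>_def g_def)
    then show "p \<in> graph g"
      by (auto simp: p_eq graph_def)
  qed (auto simp: graph_def \<pi>_def g_def)
  moreover have "continuous_on UNIV (\<lambda>p. (fst p, \<pi> i (snd p)))" for i
    unfolding \<pi>_def by (intro continuous_on_map_snd continuous_on_reindex)
  then have "closed (\<Inter>i. (\<lambda>p. (fst p, \<pi> i (snd p))) -` graph (gs i))"
    by (intro closed_INT ballI closed_vimage[OF assms])
  ultimately show ?thesis
    by (simp add: g_def[abs_def])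
qed

lemma closed_graph_clopen_UN:
  fixes A :: "nat \<Rightarrow> 'a::metric_space set"
  assumes "\<And>i. closed_graph_clopen (A i)"
  shows "closed_graph_clopen (\<Union>i. A i)"
proof -
  obtain gs where gs: "\<And>i. closed (graph (gs i))" "\<And>i. open_along (gs i) (A i)"
    using assms unfolding closed_graph_clopen_def by metis
  define g where "g x = (\<lambda>k. gs (fst (prod_decode k)) x (snd (prod_decode k)))" for x
  have closed_g: "closed (graph g)"
    unfolding g_def[abs_def] by (intro closed_graph_interleave gs(1))
  \<comment> \<open>each \<open>gs i\<close> factors continuously through \<open>g\<close>, so \<open>A i\<close> stays open along \<open>g\<close>\<close>
  have "gs i = (\<lambda>y j. y (prod_encode (i, j))) \<circ> g" for i
    by (auto simp: g_def)
  then have "open_along g (A i)" for i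
    using open_along_compose[OF continuous_on_reindex] gs(2) by metis
  then obtain W where W: "\<And>i. open (W i)" "\<And>i. A i = {x. (x, g x) \<in> W i}"
    unfolding open_along_def by metis
  have "open (\<Union>i. W i)"
    using W(1) by blast
  then obtain h where
    "closed (graph h)" "open_along h {x. (x, g x) \<in> (\<Union>i. W i)}"
    "open_along h (- {x. (x, g x) \<in> (\<Union>i. W i)})"
    using closed_graph_refinement[OF closed_g] by blast
  moreover have "(\<Union>i. A i) = {x. (x, g x) \<in> (\<Union>i. W i)}"
    using W(2) by auto
  ultimately show ?thesis
    unfolding closed_graph_clopen_def by auto
qed

lemma closed_graph_clopen_borel:
  assumes "A \<in> sets borel"
  shows "closed_graph_clopen A"
proof -
  have "A \<in> sigma_sets UNIV {S. open S}"
    using assms by (simp add: sets_borel)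
  then show ?thesis
  proof induct
    case (Union A)
    then show ?case
      by (simp add: closed_graph_clopen_UN)
  qed (auto simp: closed_graph_clopen_open closed_graph_clopen_Compl Compl_eq_Diff_UNIV[symmetric])
qed

section \<open>The perfect set theorem for closed sets\<close>

definition condensation_points :: "'a::topological_space set \<Rightarrow> 'a set" where
  "condensation_points S = {p. \<forall>T. open T \<and> p \<in> T \<longrightarrow> uncountable (S \<inter> T)}"

lemma closed_condensation_points: "closed (condensation_points S)"
proof -
  have "- condensation_points S = \<Union>{T. open T \<and> countable (S \<inter> T)}"
    by (auto simp: condensation_points_def)
  then show ?thesis
    by (metis (no_types, lifting) closed_open mem_Collect_eq open_Union)
qed

lemma countable_Diff_condensation_points:
  fixes S :: "'a::second_countable_topology set"
  shows "countable (S - condensation_points S)"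
proof -
  obtain \<B> :: "'a set set" where \<B>: "countable \<B>" "topological_basis \<B>"
    using ex_countable_basis by blast
  have "S - condensation_points S \<subseteq> (\<Union>b\<in>{b\<in>\<B>. countable (S \<inter> b)}. S \<inter> b)"
  proof
    fix p assume "p \<in> S - condensation_points S"
    then obtain T where T: "open T" "p \<in> T" "countable (S \<inter> T)" "p \<in> S"
      by (auto simp: condensation_points_def)
    then obtain b where b: "b \<in> \<B>" "p \<in> b" "b \<subseteq> T"
      using topological_basisE[OF \<B>(2)] by metis
    then have "countable (S \<inter> b)"
      using countable_subset[OF _ T(3)] by blast
    with b T(4) show "p \<in> (\<Union>b\<in>{b\<in>\<B>. countable (S \<inter> b)}. S \<inter> b)"
      by blast
  qed
  moreover have "countable (\<Union>b\<in>{b\<in>\<B>. countable (S \<inter> b)}. S \<inter> b)"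
    using \<B>(1) by (intro countable_UN) auto
  ultimately show ?thesis
    by (rule countable_subset)
qed

lemma perfect_condensation_points:
  fixes S :: "'a::second_countable_topology set"
  defines "K \<equiv> S \<inter> condensation_points S"
  assumes "p \<in> K"
  shows "p islimpt K"
proof (rule islimptI)
  fix T assume "p \<in> T" "open T"
  then have "uncountable (S \<inter> T)"
    using assms by (auto simp: condensation_points_def)
  moreover have "countable ((S - condensation_points S) \<union> {p})"
    by (simp add: countable_Diff_condensation_points)
  ultimately obtain y where "y \<in> (S \<inter> T) - ((S - condensation_points S) \<union> {p})"
    by (metis countable_empty uncountable_minus_countable ex_in_conv)
  then show "\<exists>y\<in>K. y \<in> T \<and> y \<noteq> p"
    by (auto simp: K_def)
qed

lemma uncountable_closed_contains_continuum:
  fixes S :: "'a::{complete_space, second_countable_topology} set"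
  assumes "closed S" "uncountable S"
  shows "\<exists>P \<subseteq> S. closed P \<and> (UNIV::real set) \<lesssim> P"
proof -
  define K where "K = S \<inter> condensation_points S"
  have "closed K"
    unfolding K_def using assms(1) closed_condensation_points by blast
  have "K \<noteq> {}"
  proof
    assume "K = {}"
    then have "S - condensation_points S = S"
      by (auto simp: K_def)
    then show False
      using countable_Diff_condensation_points[of S] assms(2) by simp
  qed
  have "euclidean derived_set_of K = K"
  proof -
    have "euclidean derived_set_of K = {x. x islimpt K}"
      by (auto simp: derived_set_of_def islimpt_def)
    then show ?thesis
      using perfect_condensation_points[of _ S] \<open>closed K\<close> closed_limpt by (auto simp: K_def)
  qed
  then have "(UNIV::real set) \<lesssim> K"
    using lepoll_perfect_set completely_metrizable_space_euclidean \<open>K \<noteq> {}\<close> by blast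
  then show ?thesis
    using \<open>closed K\<close> by (auto simp: K_def)
qed

section \<open>Uncountable Borel sets contain injective projections of perfect sets\<close>

lemma closed_sets_lepoll_reals:
  "{P::'a::second_countable_topology set. closed P} \<lesssim> (UNIV::real set)"
proof -
  obtain \<B> :: "'a set set" where \<B>: "countable \<B>" "topological_basis \<B>"
    using ex_countable_basis by blast
  obtain f :: "'a set \<Rightarrow> nat" where f: "inj_on f \<B>"
    using \<B>(1) by (auto simp: countable_def)
  have closed_eq: "P = - \<Union>{b\<in>\<B>. b \<inter> P = {}}" if "closed P" for P
  proof (intro equalityI subsetI)
    fix x assume x: "x \<in> - \<Union>{b\<in>\<B>. b \<inter> P = {}}"
    show "x \<in> P"
    proof (rule ccontr)
      assume "x \<notin> P"
      moreover have "open (- P)"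
        using that by (simp add: open_Compl)
      ultimately obtain b where "b \<in> \<B>" "x \<in> b" "b \<subseteq> - P"
        using topological_basisE[OF \<B>(2)] by (metis ComplI)
      then show False
        using x by blast
    qed
  qed blast
  have "inj_on (\<lambda>P. f ` {b\<in>\<B>. b \<inter> P = {}}) {P. closed P}"
  proof (rule inj_onI)
    fix P Q assume "P \<in> {P. closed P}" "Q \<in> {P. closed P}"
      and "f ` {b\<in>\<B>. b \<inter> P = {}} = f ` {b\<in>\<B>. b \<inter> Q = {}}"
    moreover have "{b\<in>\<B>. b \<inter> P = {}} = {b\<in>\<B>. b \<inter> Q = {}}"
      using calculation(3) by (subst (asm) inj_on_image_eq_iff[OF f]) auto
    ultimately show "P = Q"
      using closed_eq[of P] closed_eq[of Q] by simp
  qed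
  then have "{P::'a set. closed P} \<lesssim> (UNIV::nat set set)"
    unfolding lepoll_def by blast
  also have "\<dots> \<approx> (UNIV::real set)"
    by (rule nat_sets_eqpoll_reals)
  finally show ?thesis .
qed

definition injective_closed_projections :: "'a::topological_space set set" where
  "injective_closed_projections =
     {fst ` P | P :: ('a \<times> (nat \<Rightarrow> real)) set. closed P \<and> inj_on fst P \<and> (UNIV::real set) \<lesssim> P}"

lemma injective_closed_projections_lepoll_reals:
  "(injective_closed_projections :: 'a::second_countable_topology set set) \<lesssim> (UNIV::real set)"
proof -
  have "injective_closed_projections \<subseteq> image fst ` {P :: ('a \<times> (nat \<Rightarrow> real)) set. closed P}"
    by (auto simp: injective_closed_projections_def)
  then have "(injective_closed_projections :: 'a set set) \<lesssim> {P :: ('a \<times> (nat \<Rightarrow> real)) set. closed P}"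
    by (meson image_lepoll lepoll_trans subset_imp_lepoll)
  also have "\<dots> \<lesssim> (UNIV::real set)"
    by (rule closed_sets_lepoll_reals)
  finally show ?thesis .
qed

lemma reals_lepoll_injective_closed_projection:
  "F \<in> injective_closed_projections \<Longrightarrow> (UNIV::real set) \<lesssim> F"
  unfolding injective_closed_projections_def
  by (auto elim: lepoll_trans2 dest: inj_on_image_eqpoll_self intro: eqpoll_sym)

lemma uncountable_borel_contains_injective_closed_projection:
  fixes Z :: "'a::{complete_space, second_countable_topology} set"
  assumes "Z \<in> sets borel" "uncountable Z"
  shows "\<exists>F\<in>injective_closed_projections. F \<subseteq> Z"
proof -
  obtain g where g: "closed (graph g)" "open_along g (- Z)"
    using closed_graph_clopen_borel[OF assms(1)] by (auto simp: closed_graph_clopen_def)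
  obtain W where W: "open W" "- Z = {x. (x, g x) \<in> W}"
    using g(2) by (auto simp: open_along_def)
  define S where "S = graph g - W"
  have "closed S"
    unfolding S_def using g(1) W(1) by (intro closed_Diff)
  have "fst ` S = Z"
    using W(2) by (force simp: S_def graph_def)
  then have "uncountable S"
    using assms(2) by (metis countable_image)
  then obtain P where P: "P \<subseteq> S" "closed P" "(UNIV::real set) \<lesssim> P"
    using uncountable_closed_contains_continuum[OF \<open>closed S\<close>] by blast
  have "inj_on fst P"
    using P(1) inj_on_fst_graph[of g] by (auto simp: S_def intro: inj_on_subset)
  then have "fst ` P \<in> injective_closed_projections"
    using P by (auto simp: injective_closed_projections_def)
  moreover have "fst ` P \<subseteq> Z"
    using P(1) \<open>fst ` S = Z\<close> by blast
  ultimately show ?thesis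
    by blast
qed

section \<open>Unit equilateral triangles in the plane\<close>

definition unit_triangle :: "'a::metric_space \<Rightarrow> 'a \<Rightarrow> 'a \<Rightarrow> bool" where
  "unit_triangle a b c \<longleftrightarrow> dist a b = 1 \<and> dist a c = 1 \<and> dist b c = 1"

definition unit_triangle_completions :: "'a::metric_space set \<Rightarrow> 'a set" where
  "unit_triangle_completions X = {c. \<exists>a\<in>X. \<exists>b\<in>X. unit_triangle a b c}"

lemma dist_vec2: "dist (x::real^2) y = sqrt ((x$1 - y$1)^2 + (x$2 - y$2)^2)"
  by (simp add: dist_norm norm_vec_def L2_set_def UNIV_2)

text \<open>The two points forming an equilateral triangle with \<open>a\<close> and \<open>b\<close>: the midpoint of \<open>ab\<close>
  plus \<open>\<plusminus>\<surd>3/2\<close> times \<open>b - a\<close> rotated by a right angle.\<close>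
definition equilateral_apex :: "real^2 \<Rightarrow> real^2 \<Rightarrow> bool \<Rightarrow> real^2" where
  "equilateral_apex a b s = (let c = (if s then sqrt 3 / 2 else - (sqrt 3 / 2)) in
     vector [(a$1 + b$1)/2 - c * (b$2 - a$2), (a$2 + b$2)/2 + c * (b$1 - a$1)])"

lemma unit_triangle_equilateral_apex:
  assumes "unit_triangle a b z"
  shows "\<exists>s. z = equilateral_apex a b s"
proof -
  define d1 where "d1 = b$1 - a$1"
  define d2 where "d2 = b$2 - a$2"
  define u1 where "u1 = z$1 - (a$1 + b$1)/2"
  define u2 where "u2 = z$2 - (a$2 + b$2)/2"
  have ab: "(a$1 - b$1)^2 + (a$2 - b$2)^2 = 1" and az: "(a$1 - z$1)^2 + (a$2 - z$2)^2 = 1"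
    and bz: "(b$1 - z$1)^2 + (b$2 - z$2)^2 = 1"
    using assms by (simp_all add: unit_triangle_def dist_vec2)
  have dd: "d1^2 + d2^2 = 1"
    using ab unfolding d1_def d2_def by (simp add: power2_commute)
  have ud: "u1 * d1 + u2 * d2 = 0"
    using az bz unfolding u1_def u2_def d1_def d2_def by algebra
  have uu: "u1^2 + u2^2 = 3/4"
    using ab az bz unfolding u1_def u2_def by algebra
  \<comment> \<open>\<open>u\<close> is orthogonal to the unit vector \<open>d\<close>, hence \<open>u = c\<cdot>(-d2, d1)\<close> with \<open>c\<^sup>2 = 3/4\<close>.\<close>
  define c where "c = u2 * d1 - u1 * d2"
  have u1: "u1 = - c * d2" and u2: "u2 = c * d1"
    using dd ud unfolding c_def by algebra+
  have "c^2 = (sqrt 3 / 2)^2"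
    using dd ud uu unfolding c_def by (simp add: power_divide) algebra
  then obtain s where "c = (if s then sqrt 3 / 2 else - (sqrt 3 / 2))"
    by (metis power2_eq_iff)
  then have "z = equilateral_apex a b s"
    using u1 u2 unfolding equilateral_apex_def Let_def u1_def u2_def d1_def d2_def
    by (simp add: vec_eq_iff forall_2 algebra_simps)
  then show ?thesis
    by blast
qed

lemma unit_triangle_completions_subset:
  "unit_triangle_completions X \<subseteq> (\<lambda>(a, b, s). equilateral_apex a b s) ` (X \<times> X \<times> UNIV)"
  unfolding unit_triangle_completions_def
  by (force dest: unit_triangle_equilateral_apex)

lemma ex_unit_triangle: "\<exists>a b c :: real^2. unit_triangle a b c"
proof -
  have s3: "(sqrt 3 / 2)^2 = (3/4::real)"
    by (simp add: power_divide)
  have "dist (vector [0, 0]) (vector [1, 0] :: real^2) = 1"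
    by (simp add: dist_vec2)
  moreover have "dist (vector [0, 0]) (vector [1/2, sqrt 3 / 2] :: real^2) = 1"
    by (simp add: dist_vec2 s3 power_divide)
  moreover have "(1 - 1/2)^2 + (0 - sqrt 3 / 2)^2 = (1::real)"
    using s3 by (simp add: power2_eq_square)
  then have "dist (vector [1, 0]) (vector [1/2, sqrt 3 / 2] :: real^2) = 1"
    by (simp add: dist_vec2)
  ultimately show ?thesis
    unfolding unit_triangle_def by blast
qed

lemma not_three_I_covering_if_no_unit_triangle:
  assumes "\<forall>a\<in>B. \<forall>b\<in>B. \<forall>c\<in>B. \<not> unit_triangle a b c"
  shows "\<not> three_I_covering B"
proof
  assume "three_I_covering B"
  obtain a b c :: "real^2" where abc: "unit_triangle a b c"
    using ex_unit_triangle by blast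
  then have "card {a, b, c} = 3"
    by (auto simp: unit_triangle_def card_insert_if)
  then obtain \<phi> where \<phi>: "plane_isometry \<phi>" "\<phi> ` {a, b, c} \<subseteq> B"
    using \<open>three_I_covering B\<close> unfolding three_I_covering_def by blast
  then have "unit_triangle (\<phi> a) (\<phi> b) (\<phi> c)"
    using abc by (simp add: plane_isometry_def unit_triangle_def)
  then show False
    using assms \<phi>(2) by blast
qed

section \<open>Bernstein sets without unit equilateral triangles\<close>

lemma lepoll_iff_card_of_ordLeq: "A \<lesssim> B \<longleftrightarrow> |A| \<le>o |B|"
  by (simp add: lepoll_def card_of_ordLeq[symmetric])

lemma finite_card_of_ordLess_infinite:
  "finite A \<Longrightarrow> \<not> finite C \<Longrightarrow> |A| <o |C|"
  by (rule finite_ordLess_infinite[OF card_of_Well_order card_of_Well_order]) (simp_all add: Field_card_of)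

lemma card_of_Times_ordLess_infinite:
  assumes "\<not> finite C" and "|A| <o |C|" and "|B| <o |C|"
  shows "|A \<times> B| <o |C|"
proof (cases "finite A \<and> finite B")
  case True
  then show ?thesis
    using assms(1) by (intro finite_card_of_ordLess_infinite finite_cartesian_product) auto
next
  case False
  consider "|B| \<le>o |A|" | "|A| \<le>o |B|"
    using ordLeq_total[OF card_of_Well_order card_of_Well_order, of B A] by blast
  then show ?thesis
  proof cases
    case 1
    then have "\<not> finite A"
      using False card_of_ordLeq_finite by blast
    have "|A \<times> B| \<le>o |A \<times> A|"
      using 1 by (rule card_of_Times_mono2)
    moreover have "|A \<times> A| =o |A|"
      using \<open>\<not> finite A\<close> by (rule card_of_Times_same_infinite)
    ultimately show ?thesis
      using assms(2) ordLeq_ordIso_trans ordLeq_ordLess_trans by blast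
  next
    case 2
    then have "\<not> finite B"
      using False card_of_ordLeq_finite by blast
    have "|A \<times> B| \<le>o |B \<times> B|"
      using 2 by (rule card_of_Times_mono1)
    moreover have "|B \<times> B| =o |B|"
      using \<open>\<not> finite B\<close> by (rule card_of_Times_same_infinite)
    ultimately show ?thesis
      using assms(3) ordLeq_ordIso_trans ordLeq_ordLess_trans by blast
  qed
qed

lemma exists_outside_small_set:
  assumes "|C| \<le>o |F|" and "|S| <o |C|"
  obtains x where "x \<in> F" "x \<notin> S"
  using assms card_of_mono1 not_ordLess_ordLeq ordLeq_ordLess_trans subsetI by metis

lemma card_of_image_underS_ordLess:
  assumes "F \<in> \<F>" and "|\<F>| \<le>o |C|"
  shows "|f ` underS |\<F>| F| <o |C|"
proof -
  have "|underS |\<F>| F| <o |\<F>|"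
    using assms(1) card_of_underS[OF card_of_Card_order] by (simp add: Field_card_of)
  then show ?thesis
    using assms(2) card_of_image ordLess_ordLeq_trans ordLeq_ordLess_trans by metis
qed

lemma card_of_unit_triangle_completions_ordLess:
  fixes X :: "(real^2) set"
  assumes "\<not> finite C" and "|X| <o |C|"
  shows "|unit_triangle_completions X| <o |C|"
proof -
  have "|UNIV::bool set| <o |C|"
    using assms(1) by (intro finite_card_of_ordLess_infinite) auto
  then have "|X \<times> X \<times> (UNIV::bool set)| <o |C|"
    using assms by (intro card_of_Times_ordLess_infinite)
  moreover have "|unit_triangle_completions X| \<le>o |X \<times> X \<times> (UNIV::bool set)|"
    by (rule ordLeq_transitive[OF card_of_mono1[OF unit_triangle_completions_subset] card_of_image])
  ultimately show ?thesis
    using ordLeq_ordLess_trans by blast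
qed

lemma wo_rel_recursive_choice:
  fixes P :: "'b set \<Rightarrow> 'a \<Rightarrow> 'b \<Rightarrow> bool"
  assumes "wo_rel r" and step: "\<And>f a. a \<in> Field r \<Longrightarrow> \<exists>y. P (f ` underS r a) a y"
  shows "\<exists>f. \<forall>a\<in>Field r. P (f ` underS r a) a (f a)"
proof -
  define H where "H f a = (SOME y. P (f ` underS r a) a y)" for f a
  define f where "f = wo_rel.worec r H"
  have "wo_rel.adm_wo r H"
    unfolding wo_rel.adm_wo_def[OF assms(1)]
  proof (intro allI impI)
    fix g h :: "'a \<Rightarrow> 'b" and a assume "\<forall>y\<in>underS r a. g y = h y"
    then have "g ` underS r a = h ` underS r a"
      by (intro image_cong) auto
    then show "H g a = H h a"
      by (simp add: H_def)
  qed
  then have f_eq: "H f a = f a" for a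
    using fun_cong[OF wo_rel.worec_fixpoint[OF assms(1)], of H a] by (simp add: f_def)
  have "P (f ` underS r a) a (f a)" if "a \<in> Field r" for a
    using someI_ex[OF step[of a f, OF that]] f_eq[of a] by (simp add: H_def)
  then show ?thesis
    by blast
qed

lemma wo_rel_greatest_of_three:
  assumes "wo_rel r" and "a \<in> Field r" "b \<in> Field r" "c \<in> Field r"
  obtains m where "m \<in> {a, b, c}" "{a, b, c} - {m} \<subseteq> underS r m"
proof -
  define m where "m = wo_rel.max2 r (wo_rel.max2 r a b) c"
  have ab: "wo_rel.max2 r a b \<in> Field r" "(a, wo_rel.max2 r a b) \<in> r" "(b, wo_rel.max2 r a b) \<in> r"
    using wo_rel.max2_among[OF assms(1,2,3)] wo_rel.max2_greater[OF assms(1,2,3)] assms(2,3) by auto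
  have "m \<in> {a, b, c}"
    using wo_rel.max2_among[OF assms(1) ab(1) assms(4)] wo_rel.max2_among[OF assms(1,2,3)]
    by (auto simp: m_def)
  moreover have "(a, m) \<in> r" "(b, m) \<in> r" "(c, m) \<in> r"
    using wo_rel.max2_greater[OF assms(1) ab(1) assms(4)] ab(2,3) wo_rel.TRANS[OF assms(1)]
    unfolding m_def trans_def by blast+
  ultimately show ?thesis
    using that by (auto simp: underS_def)
qed

lemma no_unit_triangle_along_wo_rel:
  assumes "wo_rel r" and avoid: "\<And>a. a \<in> Field r \<Longrightarrow> x a \<notin> unit_triangle_completions (x ` underS r a)"
  shows "\<forall>p\<in>x ` Field r. \<forall>q\<in>x ` Field r. \<forall>s\<in>x ` Field r. \<not> unit_triangle p q s"
proof (intro ballI notI)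
  fix p q s assume "p \<in> x ` Field r" "q \<in> x ` Field r" "s \<in> x ` Field r" and pqs: "unit_triangle p q s"
  then obtain a b c where abc: "a \<in> Field r" "b \<in> Field r" "c \<in> Field r" "p = x a" "q = x b" "s = x c"
    by blast
  then obtain m where m: "m \<in> {a, b, c}" "{a, b, c} - {m} \<subseteq> underS r m"
    using wo_rel_greatest_of_three[OF assms(1)] by metis
  have unit_dist: "dist (x i) (x j) = 1" if "i \<in> {a, b, c}" "j \<in> {a, b, c}" "i \<noteq> j" for i j
    using that pqs unfolding abc unit_triangle_def by (auto simp: dist_commute)
  have "card {a, b, c} = 3"
    using pqs unfolding abc unit_triangle_def by (auto simp: card_insert_if)
  then have "card ({a, b, c} - {m}) = 2"
    using m(1) by simp
  then obtain i j where ij: "{a, b, c} - {m} = {i, j}" "i \<noteq> j"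
    unfolding card_2_iff by blast
  then have "i \<in> {a, b, c}" "j \<in> {a, b, c}" "i \<noteq> m" "j \<noteq> m"
    by blast+
  \<comment> \<open>the vertex with the largest index completes a unit triangle on the two others\<close>
  with m(1) ij(2) have "unit_triangle (x i) (x j) (x m)"
    unfolding unit_triangle_def by (intro conjI unit_dist)
  moreover have "x i \<in> x ` underS r m" "x j \<in> x ` underS r m"
    using ij(1) m(2) by auto
  ultimately have "x m \<in> unit_triangle_completions (x ` underS r m)"
    unfolding unit_triangle_completions_def by blast
  moreover have "m \<in> Field r"
    using m(1) abc by blast
  ultimately show False
    using avoid by blast
qed

lemma splits_along_wo_rel:
  assumes "wo_rel r"
    and "\<And>F. F \<in> Field r \<Longrightarrow> x F \<in> F \<and> y F \<in> F \<and> x F \<noteq> y F"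
    and "\<And>F. F \<in> Field r \<Longrightarrow> x F \<notin> y ` underS r F \<and> y F \<notin> x ` underS r F"
  shows "\<forall>F\<in>Field r. F \<inter> x ` Field r \<noteq> {} \<and> F - x ` Field r \<noteq> {}"
proof (intro ballI conjI)
  fix F assume F: "F \<in> Field r"
  then show "F \<inter> x ` Field r \<noteq> {}"
    using assms(2) by blast
  have "y F \<noteq> x G" if G: "G \<in> Field r" for G
  proof -
    consider "G = F" | "G \<in> underS r F" | "F \<in> underS r G"
      using wo_rel.TOTALS[OF assms(1)] F G by (auto simp: underS_def)
    then show ?thesis
    proof cases
      case 1
      then show ?thesis
        using assms(2)[OF F] by metis
    next
      case 2
      then have "x G \<in> x ` underS r F"
        by blast
      then show ?thesis
        using assms(3)[OF F] by metis
    next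
      case 3
      then have "y F \<in> y ` underS r G"
        by blast
      then show ?thesis
        using assms(3)[OF G] by metis
    qed
  qed
  then show "F - x ` Field r \<noteq> {}"
    using assms(2)[OF F] by blast
qed

lemma bernstein_set_without_unit_triangles:
  fixes \<F> :: "(real^2) set set" and C :: "'c set"
  assumes "\<not> finite C" and "\<F> \<lesssim> C" and "\<And>F. F \<in> \<F> \<Longrightarrow> C \<lesssim> F"
  shows "\<exists>B. (\<forall>F\<in>\<F>. F \<inter> B \<noteq> {} \<and> F - B \<noteq> {}) \<and> (\<forall>a\<in>B. \<forall>b\<in>B. \<forall>c\<in>B. \<not> unit_triangle a b c)"
proof -
  have small: "|\<F>| \<le>o |C|" and large: "\<And>F. F \<in> \<F> \<Longrightarrow> |C| \<le>o |F|"
    using assms(2,3) by (simp_all add: lepoll_iff_card_of_ordLeq)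
  define r where "r = |\<F>|"
  have wo: "wo_rel r"
    unfolding wo_rel_def r_def by (rule card_of_Well_order)
  have Field_r: "Field r = \<F>"
    unfolding r_def by (rule Field_card_of)
  \<comment> \<open>At stage \<open>F\<close> put a point \<open>x\<close> of \<open>F\<close> into \<open>B\<close> and reserve a point \<open>y\<close> of \<open>F\<close> for the
      complement, where \<open>x\<close> avoids the reserved points and every unit triangle on two earlier
      points of \<open>B\<close>.\<close>
  define step where "step P F xy \<longleftrightarrow> fst xy \<in> F \<and> snd xy \<in> F \<and> fst xy \<noteq> snd xy \<and>
      fst xy \<notin> snd ` P \<union> unit_triangle_completions (fst ` P) \<and> snd xy \<notin> fst ` P"
    for P :: "((real^2) \<times> (real^2)) set" and F xy
  have "\<exists>xy. step (f ` underS r F) F xy" if F: "F \<in> Field r" for f F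
  proof -
    let ?X = "fst ` f ` underS r F" and ?Y = "snd ` f ` underS r F"
    have X: "|?X| <o |C|" and Y: "|?Y| <o |C|"
      using card_of_image_underS_ordLess[OF _ small, of F] F Field_r by (simp_all add: r_def image_image)
    then have "|?Y \<union> unit_triangle_completions ?X| <o |C|"
      by (simp add: card_of_Un_ordLess_infinite assms(1) card_of_unit_triangle_completions_ordLess)
    then obtain x where x: "x \<in> F" "x \<notin> ?Y \<union> unit_triangle_completions ?X"
      using exists_outside_small_set large F Field_r by blast
    have "|?X \<union> {x}| <o |C|"
      using X finite_card_of_ordLess_infinite[of "{x}"] assms(1) card_of_Un_ordLess_infinite by blast
    then obtain y where "y \<in> F" "y \<notin> ?X \<union> {x}"
      using exists_outside_small_set large F Field_r by blast
    with x show ?thesis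
      unfolding step_def by (intro exI[of _ "(x, y)"]) auto
  qed
  then obtain f where f: "\<And>F. F \<in> \<F> \<Longrightarrow> step (f ` underS r F) F (f F)"
    using wo_rel_recursive_choice[OF wo] Field_r by metis
  have "\<forall>F\<in>\<F>. F \<inter> (fst \<circ> f) ` \<F> \<noteq> {} \<and> F - (fst \<circ> f) ` \<F> \<noteq> {}"
    using splits_along_wo_rel[OF wo, of "fst \<circ> f" "snd \<circ> f"] f
    unfolding Field_r step_def by (simp add: image_image)
  moreover have "\<forall>a\<in>(fst \<circ> f) ` \<F>. \<forall>b\<in>(fst \<circ> f) ` \<F>. \<forall>c\<in>(fst \<circ> f) ` \<F>. \<not> unit_triangle a b c"
    using no_unit_triangle_along_wo_rel[OF wo, of "fst \<circ> f"] f
    unfolding Field_r step_def by (simp add: image_image)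
  ultimately show ?thesis
    by blast
qed

lemma bernstein_set_if_splits_injective_closed_projections:
  assumes "\<forall>F\<in>injective_closed_projections. F \<inter> B \<noteq> {} \<and> F - B \<noteq> {}"
  shows "bernstein_set B"
  unfolding bernstein_set_def
proof (intro allI impI)
  fix Z :: "(real^2) set"
  assume "Z \<in> sets borel \<and> uncountable Z"
  then obtain F where "F \<in> injective_closed_projections" "F \<subseteq> Z"
    using uncountable_borel_contains_injective_closed_projection[of Z] by blast
  then show "Z \<inter> B \<noteq> {} \<and> Z - B \<noteq> {}"
    using assms by blast
qed

theorem mainTheorem17:
  shows "\<exists>B :: (real^2) set. bernstein_set B \<and> \<not> three_I_covering B"
proof -
  obtain B :: "(real^2) set"
    where "\<forall>F\<in>injective_closed_projections. F \<inter> B \<noteq> {} \<and> F - B \<noteq> {}"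
      and "\<forall>a\<in>B. \<forall>b\<in>B. \<forall>c\<in>B. \<not> unit_triangle a b c"
    using bernstein_set_without_unit_triangles[OF infinite_UNIV_char_0
        injective_closed_projections_lepoll_reals reals_lepoll_injective_closed_projection]
    by blast
  then show ?thesis
    using bernstein_set_if_splits_injective_closed_projections not_three_I_covering_if_no_unit_triangle
    by blast
qed

end
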